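(* Let $R$ be a finite Frobenius ring, $\chi,\chi'$ generating characters of $R$, $M=\{x_0=0,x_1,\ldots,x_n\}$ a finite $R$-bimodule, and $B$ a non-degenerate bilinear form on $M$. Then $H=[\chi(B(x_i,x_j))]_{0\le i,j\le n}$ and $H'=[\chi'(B(x_i,x_j))]_{0\le i,j\le n}$ are equivalent by a row permutation, i.e. $H'$ is obtained from $H$ by permuting its rows.
   Context: A bilinear form on $M$ is a biadditive map $B:M\times M\to R$ with $B(rx,y)=rB(x,y)$ and $B(x,yr)=B(x,y)r$; it is non-degenerate if its left and right kernels are zero. A character of $R$ is a group homomorphism $(R,+)\to\mathbb{C}^*$; it is generating if its kernel contains no nonzero left ideal and no nonzero right ideal of $R$. *)

theory Defs
  imports Complex_Main "HOL-Combinatorics.Permutations"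
begin

definition left_ideal :: "'r::ring_1 set \<Rightarrow> bool" where
  "left_ideal I \<longleftrightarrow> 0 \<in> I \<and> (\<forall>a\<in>I. \<forall>b\<in>I. a - b \<in> I) \<and> (\<forall>r. \<forall>a\<in>I. r * a \<in> I)"

definition right_ideal :: "'r::ring_1 set \<Rightarrow> bool" where
  "right_ideal I \<longleftrightarrow> 0 \<in> I \<and> (\<forall>a\<in>I. \<forall>b\<in>I. a - b \<in> I) \<and> (\<forall>r. \<forall>a\<in>I. a * r \<in> I)"

definition character :: "('r::ring_1 \<Rightarrow> complex) \<Rightarrow> bool" where
  "character \<chi> \<longleftrightarrow> (\<forall>a. \<chi> a \<noteq> 0) \<and> (\<forall>a b. \<chi> (a + b) = \<chi> a * \<chi> b)"

definition generating_character :: "('r::ring_1 \<Rightarrow> complex) \<Rightarrow> bool" where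
  "generating_character \<chi> \<longleftrightarrow> character \<chi> \<and>
     (\<forall>I. left_ideal I \<and> I \<subseteq> {a. \<chi> a = 1} \<longrightarrow> I = {0}) \<and>
     (\<forall>I. right_ideal I \<and> I \<subseteq> {a. \<chi> a = 1} \<longrightarrow> I = {0})"

text \<open>Finite Frobenius ring, via the standard characterization of finite Frobenius
  rings (Wood) as those admitting a generating character.\<close>
definition finite_frobenius_ring :: "'r::ring_1 itself \<Rightarrow> bool" where
  "finite_frobenius_ring TYPE('r) \<longleftrightarrow> finite (UNIV :: 'r set) \<and>
     (\<exists>\<chi> :: 'r \<Rightarrow> complex. generating_character \<chi>)"

definition bimodule :: "('r::ring_1 \<Rightarrow> 'm::ab_group_add \<Rightarrow> 'm) \<Rightarrow> ('m \<Rightarrow> 'r \<Rightarrow> 'm) \<Rightarrow> bool" where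
  "bimodule lm rm \<longleftrightarrow>
     (\<forall>r x y. lm r (x + y) = lm r x + lm r y) \<and>
     (\<forall>r s x. lm (r + s) x = lm r x + lm s x) \<and>
     (\<forall>r s x. lm (r * s) x = lm r (lm s x)) \<and>
     (\<forall>x. lm 1 x = x) \<and>
     (\<forall>r x y. rm (x + y) r = rm x r + rm y r) \<and>
     (\<forall>r s x. rm x (r + s) = rm x r + rm x s) \<and>
     (\<forall>r s x. rm x (r * s) = rm (rm x r) s) \<and>
     (\<forall>x. rm x 1 = x) \<and>
     (\<forall>r s x. lm r (rm x s) = rm (lm r x) s)"

definition bilinear_form ::
  "('r::ring_1 \<Rightarrow> 'm::ab_group_add \<Rightarrow> 'm) \<Rightarrow> ('m \<Rightarrow> 'r \<Rightarrow> 'm) \<Rightarrow> ('m \<Rightarrow> 'm \<Rightarrow> 'r) \<Rightarrow> bool" where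
  "bilinear_form lm rm B \<longleftrightarrow>
     (\<forall>x y z. B (x + y) z = B x z + B y z) \<and>
     (\<forall>x y z. B x (y + z) = B x y + B x z) \<and>
     (\<forall>r x y. B (lm r x) y = r * B x y) \<and>
     (\<forall>r x y. B x (rm y r) = B x y * r)"

definition non_degenerate :: "('m::ab_group_add \<Rightarrow> 'm \<Rightarrow> 'r::ring_1) \<Rightarrow> bool" where
  "non_degenerate B \<longleftrightarrow>
     {x. \<forall>y. B x y = 0} = {0} \<and> {y. \<forall>x. B x y = 0} = {0}"

end

theory Submission
  imports Defs
begin

text \<open>
  By orthogonality of characters, a generating character \<chi> of a finite ring R represents
  every character of R: \<chi>' = \<chi>(r \<cdot> _) for some r \<in> R. Hence
  \<chi>'(B(m, y)) = \<chi>(B(r m, y)), i.e. the rows of H' are rows of H, reindexed by m \<mapsto> r m.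
  This map is injective: if r m = r m', the right ideal B(m - m', M) lies in the kernel of
  \<chi>', so it vanishes because \<chi>' is generating, and m = m' because the left kernel of B is
  zero. Being an injection of the finite set M into itself, it is a bijection.
\<close>

lemma character_zero: "character \<chi> \<Longrightarrow> \<chi> 0 = 1"
  unfolding character_def by (metis add_0 mult_cancel_left1)

lemma character_diff: "character \<chi> \<Longrightarrow> \<chi> (a - b) = \<chi> a / \<chi> b"
  unfolding character_def by (metis diff_add_cancel nonzero_eq_divide_eq)

lemma character_compose_additive:
  assumes "character \<chi>" and "\<And>a b. f (a + b) = f a + f b"
  shows "character (\<lambda>a. \<chi> (f a))"
  using assms unfolding character_def by simp

lemma character_mult:
  "character \<chi> \<Longrightarrow> character \<psi> \<Longrightarrow> character (\<lambda>a. \<chi> a * \<psi> a)"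
  unfolding character_def by (simp add: ac_simps)

lemma character_sum_eq_0:
  fixes \<theta> :: "'r::ring_1 \<Rightarrow> complex"
  assumes "character \<theta>" and "finite (UNIV :: 'r set)" and "\<theta> b \<noteq> 1"
  shows "(\<Sum>a\<in>UNIV. \<theta> a) = 0"
proof -
  have "(\<Sum>a\<in>UNIV. \<theta> a) = (\<Sum>a\<in>UNIV. \<theta> (a + b))"
    by (rule sum.reindex_bij_witness[where j = "\<lambda>a. a - b" and i = "\<lambda>a. a + b"]) auto
  also have "\<dots> = \<theta> b * (\<Sum>a\<in>UNIV. \<theta> a)"
    using assms(1) unfolding character_def by (simp add: sum_distrib_left mult.commute)
  finally show ?thesis
    using assms(3) by (metis mult_cancel_right1)
qed

lemma generating_character_left_ideal_eq_0:
  assumes "generating_character \<chi>" and "left_ideal I" and "\<forall>a\<in>I. \<chi> a = 1"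
  shows "I = {0}"
  using assms unfolding generating_character_def by blast

lemma generating_character_right_ideal_eq_0:
  assumes "generating_character \<chi>" and "right_ideal I" and "\<forall>a\<in>I. \<chi> a = 1"
  shows "I = {0}"
  using assms unfolding generating_character_def by blast

lemma left_ideal_principal: "left_ideal (range (\<lambda>r. r * a))"
  unfolding left_ideal_def
  by (auto simp: image_iff left_diff_distrib[symmetric] mult.assoc[symmetric] intro: exI[of _ 0])

lemma generating_character_nontrivial_on_multiples:
  assumes "generating_character \<chi>" and "a \<noteq> 0"
  shows "\<exists>r. \<chi> (r * a) \<noteq> 1"
proof (rule ccontr)
  assume "\<nexists>r. \<chi> (r * a) \<noteq> 1"
  then have "range (\<lambda>r. r * a) = {0}"
    using generating_character_left_ideal_eq_0[OF assms(1) left_ideal_principal] by blast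
  then show False
    using assms(2) by (metis mult_1 rangeI singletonD)
qed

lemma generating_character_orthogonality:
  fixes \<chi> :: "'r::ring_1 \<Rightarrow> complex"
  assumes "generating_character \<chi>" and "finite (UNIV :: 'r set)"
  shows "(\<Sum>r\<in>UNIV. \<chi> (r * a)) = (if a = 0 then of_nat (card (UNIV :: 'r set)) else 0)"
proof (cases "a = 0")
  case True
  with assms(1) show ?thesis
    by (simp add: character_zero generating_character_def)
next
  case False
  have "character (\<lambda>r. \<chi> (r * a))"
    using assms(1) unfolding generating_character_def
    by (auto intro: character_compose_additive simp: distrib_right)
  with False show ?thesis
    using generating_character_nontrivial_on_multiples[OF assms(1) False]
      character_sum_eq_0[OF _ assms(2)] by auto
qed

lemma generating_character_represents:
  fixes \<chi> \<psi> :: "'r::ring_1 \<Rightarrow> complex"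
  assumes gen: "generating_character \<chi>" and "character \<psi>" and fin: "finite (UNIV :: 'r set)"
  obtains r where "\<And>a. \<psi> a = \<chi> (r * a)"
proof -
  have \<chi>: "character \<chi>"
    using gen unfolding generating_character_def by blast
  define \<theta> where "\<theta> r a = \<psi> a * \<chi> (r * - a)" for r a
  have \<theta>: "character (\<theta> r)" for r
    unfolding \<theta>_def
    by (intro character_mult[OF \<open>character \<psi>\<close>] character_compose_additive[OF \<chi>])
       (simp add: algebra_simps)
  have "(\<Sum>r\<in>UNIV. \<Sum>a\<in>UNIV. \<theta> r a) = (\<Sum>a\<in>UNIV. \<psi> a * (\<Sum>r\<in>UNIV. \<chi> (r * - a)))"
    unfolding \<theta>_def sum_distrib_left by (rule sum.swap)
  also have "\<dots> = (\<Sum>a\<in>UNIV. if a = (0 :: 'r) then \<psi> 0 * of_nat (card (UNIV :: 'r set)) else 0)"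
    by (intro sum.cong refl)
       (simp only: generating_character_orthogonality[OF gen fin] neg_equal_0_iff_equal, simp)
  also have "\<dots> = \<psi> 0 * of_nat (card (UNIV :: 'r set))"
    using fin by (simp add: sum.delta)
  also have "\<dots> \<noteq> 0"
    using fin character_zero[OF \<open>character \<psi>\<close>] by simp
  finally obtain r where "(\<Sum>a\<in>UNIV. \<theta> r a) \<noteq> 0"
    by (metis sum.neutral)
  then have "\<theta> r a = 1" for a
    using character_sum_eq_0[OF \<theta> fin] by blast
  moreover have "\<chi> (r * a) * \<chi> (r * - a) = 1" for a
    using \<chi> character_zero[OF \<chi>] unfolding character_def
    by (metis add.right_inverse mult_minus_right)
  ultimately have "\<psi> a = \<chi> (r * a)" for a
    unfolding \<theta>_def by (metis mult.left_commute mult_1_right)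
  then show ?thesis by (rule that)
qed

lemma bilinear_form_diff_right:
  "bilinear_form lm rm B \<Longrightarrow> B z (a - b) = B z a - B z b"
  unfolding bilinear_form_def by (metis add_diff_cancel diff_add_cancel)

lemma bilinear_form_diff_left:
  "bilinear_form lm rm B \<Longrightarrow> B (a - b) y = B a y - B b y"
  unfolding bilinear_form_def by (metis add_diff_cancel diff_add_cancel)

lemma bilinear_form_right_ideal_range:
  assumes "bilinear_form lm rm B"
  shows "right_ideal (range (B z))"
  unfolding right_ideal_def
proof (intro conjI ballI allI)
  show "0 \<in> range (B z)"
    using bilinear_form_diff_right[OF assms, of z 0 0] by (metis diff_self rangeI)
next
  fix u v assume "u \<in> range (B z)" "v \<in> range (B z)"
  then obtain a b where "u = B z a" and "v = B z b"
    by blast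
  then have "u - v = B z (a - b)"
    using bilinear_form_diff_right[OF assms] by simp
  then show "u - v \<in> range (B z)"
    by simp
next
  fix s u assume "u \<in> range (B z)"
  then obtain y where "u = B z y"
    by blast
  then have "u * s = B z (rm y s)"
    using assms unfolding bilinear_form_def by simp
  then show "u * s \<in> range (B z)"
    by simp
qed

lemma generating_character_pairing_eq_imp_eq:
  assumes gen: "generating_character \<chi>" and bil: "bilinear_form lm rm B"
    and "non_degenerate B" and eq: "\<And>y. \<chi> (B m y) = \<chi> (B m' y)"
  shows "m = m'"
proof -
  have "\<chi> (B (m - m') y) = 1" for y
    using character_diff[of \<chi>] gen eq[of y] bilinear_form_diff_left[OF bil, of m m' y]
    unfolding generating_character_def character_def by simp
  then have "range (B (m - m')) = {0}"
    using generating_character_right_ideal_eq_0[OF gen bilinear_form_right_ideal_range[OF bil]]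
    by blast
  then have "m - m' \<in> {x. \<forall>y. B x y = 0}"
    by auto
  with \<open>non_degenerate B\<close> show ?thesis
    unfolding non_degenerate_def by simp
qed

lemma bij_betw_conjugate_permutes:
  assumes x: "bij_betw x A C" and g: "bij_betw g C C"
  obtains \<pi> where "\<pi> permutes A" and "\<And>i. i \<in> A \<Longrightarrow> x (\<pi> i) = g (x i)"
proof
  define \<pi> where "\<pi> i = (if i \<in> A then the_inv_into A x (g (x i)) else i)" for i
  have "bij_betw (the_inv_into A x \<circ> (g \<circ> x)) A A"
    by (rule bij_betw_trans[OF bij_betw_trans[OF x g] bij_betw_the_inv_into[OF x]])
  then have "bij_betw \<pi> A A"
    by (rule bij_betw_cong[THEN iffD1, rotated]) (simp add: \<pi>_def)
  then show "\<pi> permutes A"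
    by (rule bij_imp_permutes) (simp add: \<pi>_def)
  show "x (\<pi> i) = g (x i)" if "i \<in> A" for i
    using that g x unfolding \<pi>_def
    by (simp add: f_the_inv_into_f_bij_betw bij_betw_apply)
qed

theorem propositionA4:
  fixes \<chi> \<chi>' :: "'r::ring_1 \<Rightarrow> complex"
    and lm :: "'r \<Rightarrow> 'm::ab_group_add \<Rightarrow> 'm" and rm :: "'m \<Rightarrow> 'r \<Rightarrow> 'm"
    and B :: "'m \<Rightarrow> 'm \<Rightarrow> 'r"
    and x :: "nat \<Rightarrow> 'm" and n :: nat
  assumes "finite_frobenius_ring TYPE('r)"
    and "generating_character \<chi>" and "generating_character \<chi>'"
    and "finite (UNIV :: 'm set)" and "bimodule lm rm"
    and "bij_betw x {0..n} (UNIV :: 'm set)" and "x 0 = 0"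
    and "bilinear_form lm rm B" and "non_degenerate B"
  shows "\<exists>\<pi>. \<pi> permutes {0..n} \<and>
           (\<forall>i\<in>{0..n}. \<forall>j\<in>{0..n}. \<chi>' (B (x i) (x j)) = \<chi> (B (x (\<pi> i)) (x j)))"
proof -
  obtain r where r: "\<And>a. \<chi>' a = \<chi> (r * a)"
    using generating_character_represents[OF assms(2)] assms(1,3)
    unfolding finite_frobenius_ring_def generating_character_def by blast
  have row: "\<chi>' (B m y) = \<chi> (B (lm r m) y)" for m y
    using r assms(8) unfolding bilinear_form_def by simp
  have "inj (lm r)"
    using generating_character_pairing_eq_imp_eq[OF assms(3,8,9)] row by (metis injI)
  then have "bij (lm r)"
    using assms(4) finite_UNIV_inj_surj bij_def by blast
  then obtain \<pi> where "\<pi> permutes {0..n}" and "\<And>i. i \<in> {0..n} \<Longrightarrow> x (\<pi> i) = lm r (x i)"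
    using bij_betw_conjugate_permutes[OF assms(6)] by blast
  then show ?thesis
    using row by auto
qed

end
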